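(* Fix an integer $q\ge 2$. For $c\in\mathbb{R}$ let $\varphi_c(x)=\left|\frac{\sin \pi q(x+c)}{\sin\pi(x+c)}\right|$ (extended by continuity, with value $q$, where $x+c\in\mathbb{Z}$), and let $\gamma(c)$ be the Gelfond exponent defined below. Then $\gamma(c)=\gamma(1-c)$ for all $c\in[0,1]$. Moreover, for all $n\ge 1$ and all $x\in[0,1]$, $$\prod_{j=0}^{n-1}\varphi_c(q^jx)=\prod_{j=0}^{n-1}\varphi_{1-c}(q^j(1-x)).$$
   Context: For an integer $n\ge 0$, $S_q(n)$ is the sum of the digits of $n$ in base $q$, and $t_n^{(q;c)}=e^{2\pi i c S_q(n)}$. The Gelfond exponent $\gamma(c)$ is the infimum of all real $\gamma$ such that $\sup_{x\in\mathbb{R}}\left|\sum_{n=0}^{N-1}t_n^{(q;c)}e^{2\pi i n x}\right|=O(N^\gamma)$ as $N\to\infty$. *)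

theory Defs
  imports "HOL-Analysis.Analysis" "HOL-Library.Landau_Symbols"
begin

function digit_sum :: "nat \<Rightarrow> nat \<Rightarrow> nat" where
  "digit_sum q n = (if q < 2 \<or> n = 0 then 0 else n mod q + digit_sum q (n div q))"
  by auto
termination by (relation "Wellfounded.measure snd") auto

declare digit_sum.simps[simp del]

definition tseq :: "nat \<Rightarrow> real \<Rightarrow> nat \<Rightarrow> complex" where
  "tseq q c n = cis (2 * pi * c * real (digit_sum q n))"

definition expsum :: "nat \<Rightarrow> real \<Rightarrow> nat \<Rightarrow> real \<Rightarrow> complex" where
  "expsum q c N x = (\<Sum>n<N. tseq q c n * cis (2 * pi * real n * x))"

definition gelfond_exponent :: "nat \<Rightarrow> real \<Rightarrow> real" where
  "gelfond_exponent q c =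
     Inf {g :: real. (\<lambda>N::nat. SUP x\<in>(UNIV::real set). norm (expsum q c N x))
                       \<in> O(\<lambda>N. real N powr g)}"

definition phi :: "nat \<Rightarrow> real \<Rightarrow> real \<Rightarrow> real" where
  "phi q c x = (if x + c \<in> \<int> then real q
               else \<bar>sin (pi * real q * (x + c)) / sin (pi * (x + c))\<bar>)"

end

theory Submission
  imports Defs
begin

text \<open>Replacing \<open>c\<close> by \<open>1 - c\<close> conjugates every
  \<open>t\<^sub>n\<close> (as \<open>S\<^sub>q(n)\<close> is an integer), so the exponential sum at \<open>x\<close> becomes the
  conjugate of the original one at \<open>-x\<close>, and the suprema over \<open>x\<close> coincide. For the
  products, \<open>q\<^sup>j(1 - x) + (1 - c) = (q\<^sup>j + 1) - (q\<^sup>jx + c)\<close>, and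
  \<open>|sin \<pi>t|\<close>, \<open>|sin \<pi>qt|\<close> are invariant under \<open>t \<mapsto> m - t\<close> for integer \<open>m\<close>.\<close>

lemma abs_sin_pi_int_minus:
  fixes k t :: real
  assumes "k \<in> \<int>"
  shows "\<bar>sin (pi * k - t)\<bar> = \<bar>sin t\<bar>"
proof -
  have sin_zero: "sin (pi * k) = 0"
    using assms by (subst mult.commute) (simp add: sin_times_pi_eq_0)
  then have "(cos (pi * k))^2 = 1"
    using sin_cos_squared_add[of "pi * k"] by simp
  then have "cos (pi * k) = 1 \<or> cos (pi * k) = - 1"
    by (simp add: power2_eq_1_iff)
  then have "\<bar>cos (pi * k)\<bar> = 1"
    by auto
  moreover have "sin (pi * k - t) = - cos (pi * k) * sin t"
    by (simp add: sin_diff sin_zero)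
  ultimately show ?thesis
    by (simp add: abs_mult)
qed

lemma phi_one_minus_int_minus:
  fixes m :: real
  assumes "m \<in> \<int>"
  shows "phi q (1 - c) (m - x) = phi q c x"
proof -
  define y where "y = x + c"
  define k where "k = m + 1"
  have k_int: "k \<in> \<int>"
    using assms by (simp add: k_def)
  then have qk_int: "real q * k \<in> \<int>"
    by simp
  have shift: "m - x + (1 - c) = k - y"
    by (simp add: k_def y_def)
  have "k - y \<in> \<int> \<longleftrightarrow> y \<in> \<int>"
  proof
    assume "k - y \<in> \<int>"
    with k_int have "k - (k - y) \<in> \<int>"
      by (rule Ints_diff)
    then show "y \<in> \<int>"
      by simp
  next
    assume "y \<in> \<int>"
    with k_int show "k - y \<in> \<int>"
      by (rule Ints_diff)
  qed
  moreover have "\<bar>sin (pi * real q * (k - y))\<bar> = \<bar>sin (pi * real q * y)\<bar>"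
    using abs_sin_pi_int_minus[OF qk_int, of "pi * real q * y"] by (simp add: algebra_simps)
  moreover have "\<bar>sin (pi * (k - y))\<bar> = \<bar>sin (pi * y)\<bar>"
    using abs_sin_pi_int_minus[OF k_int, of "pi * y"] by (simp add: algebra_simps)
  ultimately show ?thesis
    unfolding phi_def shift y_def[symmetric] by (simp add: abs_divide)
qed

lemma tseq_one_minus: "tseq q (1 - c) n = cnj (tseq q c n)"
proof -
  have "tseq q (1 - c) n
      = cis (2 * pi * real (digit_sum q n)) * cis (- (2 * pi * c * real (digit_sum q n)))"
    unfolding tseq_def by (simp add: cis_mult algebra_simps)
  also have "\<dots> = cnj (tseq q c n)"
    by (simp add: cis_multiple_2pi tseq_def cis_cnj)
  finally show ?thesis .
qed

lemma expsum_one_minus: "expsum q (1 - c) N x = cnj (expsum q c N (- x))"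
  unfolding expsum_def cnj_sum by (intro sum.cong) (simp_all add: tseq_one_minus cis_cnj)

lemma Sup_norm_expsum_one_minus:
  "(SUP x. norm (expsum q (1 - c) N x)) = (SUP x. norm (expsum q c N x))"
proof -
  have "range (\<lambda>x. norm (expsum q c N (- x))) = (\<lambda>x. norm (expsum q c N x)) ` range uminus"
    by (simp only: image_image)
  then show ?thesis
    by (simp add: expsum_one_minus)
qed

lemma gelfond_exponent_one_minus: "gelfond_exponent q (1 - c) = gelfond_exponent q c"
  by (simp add: gelfond_exponent_def Sup_norm_expsum_one_minus)

theorem proposition3p1:
  fixes q :: nat
  assumes "q \<ge> 2"
  shows "(\<forall>c::real. 0 \<le> c \<and> c \<le> 1 \<longrightarrow> gelfond_exponent q c = gelfond_exponent q (1 - c))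
         \<and> (\<forall>(c::real) (n::nat) (x::real). n \<ge> 1 \<and> 0 \<le> x \<and> x \<le> 1 \<longrightarrow>
              (\<Prod>j<n. phi q c (real q ^ j * x)) = (\<Prod>j<n. phi q (1 - c) (real q ^ j * (1 - x))))"
proof (intro conjI allI impI)
  fix c :: real
  show "gelfond_exponent q c = gelfond_exponent q (1 - c)"
    by (simp add: gelfond_exponent_one_minus)
next
  fix c x :: real and n :: nat
  have "phi q (1 - c) (real q ^ j * (1 - x)) = phi q c (real q ^ j * x)" for j
    using phi_one_minus_int_minus[of "real q ^ j" q c "real q ^ j * x"]
    by (simp add: right_diff_distrib)
  then show "(\<Prod>j<n. phi q c (real q ^ j * x)) = (\<Prod>j<n. phi q (1 - c) (real q ^ j * (1 - x)))"
    by simp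
qed

end
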